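(* Let $\sigma>0$ and $\beta(s):=\exp\Big(-\frac{((\log s-\sigma^{2}/2)_{+})^{2}}{2\sigma^{2}}\Big)$ for $s>0$. Let $K(u)=u\beta(1/u)$ for $u>0$, $K(0)=0$, $K^{*}(v)=\sup_{u\ge0}\{uv-K(u)\}$, and $F(w):=\int_{w}^{1}\frac{\mathrm{d}v}{K^{*}(v)}$ for $w\in(0,1]$, with inverse function $F^{-1}$. Then for all $x>0$, \[ F^{-1}(x)\le2\exp\Big\{-\frac{1}{2\sigma^{2}}\mathsf{W}^{2}\Big(\frac{x\sigma^{2}}{2\exp(\sigma^{2}/2)}\Big)\Big\}, \] where $\mathsf{W}$ is the Lambert W function on $[0,\infty)$ (the inverse of $x\mapsto xe^{x}$) and $\mathsf{W}^{2}$ its square.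
   Context: $(t)_{+}=\max(t,0)$. *)

theory Defs
  imports "HOL-Analysis.Analysis"
begin

definition beta_fn :: "real \<Rightarrow> real \<Rightarrow> real" where
  "beta_fn \<sigma> s = exp (- ((max (ln s - \<sigma>^2/2) 0)^2) / (2 * \<sigma>^2))"

definition K_fn :: "real \<Rightarrow> real \<Rightarrow> real" where
  "K_fn \<sigma> u = (if u = 0 then 0 else u * beta_fn \<sigma> (1 / u))"

definition Kstar :: "real \<Rightarrow> real \<Rightarrow> real" where
  "Kstar \<sigma> v = (SUP u\<in>{0..}. u * v - K_fn \<sigma> u)"

definition F_fn :: "real \<Rightarrow> real \<Rightarrow> real" where
  "F_fn \<sigma> w = integral {w..1} (\<lambda>v. 1 / Kstar \<sigma> v)"

definition F_inv :: "real \<Rightarrow> real \<Rightarrow> real" where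
  "F_inv \<sigma> x = inv_into {0<..1} (F_fn \<sigma>) x"

definition lambertW :: "real \<Rightarrow> real" where
  "lambertW y = (THE w. w \<ge> 0 \<and> w * exp w = y)"

end

theory Submission
  imports Defs
begin

(* Write s = sigma sqrt(2 ln(2/v)), so that v = 2 exp(-s^2/(2 sigma^2)). For v in (0,1]
   the conjugate satisfies  v/2 exp(-sigma^2/2) exp(-s) <= K*(v) <= v : the upper bound
   because K(u) >= 0 and K(u) = u for u >= 1, the lower bound by testing the supremum at
   u = exp(-sigma^2/2 - s), where beta(1/u) = v/2.
   The upper bound gives F(w) >= -ln w, so F maps (0,1] onto [0,oo) and F(F^-1(x)) = x.
   The lower bound majorises 1/K* by an integrand with primitive
   -(2 exp(sigma^2/2)/sigma^2) (s - 1) e^s, whence F(w) <= (2 exp(sigma^2/2)/sigma^2) s e^s.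
   At w = F^-1(x) this says x sigma^2/(2 exp(sigma^2/2)) <= s e^s, i.e. W(...) <= s, and
   w = 2 exp(-s^2/(2 sigma^2)) yields the bound. *)

lemma mult_exp_strict_mono: "strict_mono_on {0::real..} (\<lambda>t. t * exp t)"
proof (rule strict_mono_onI)
  fix a b :: real assume "a \<in> {0..}" "a < b"
  then have "a * exp a \<le> a * exp b" by (simp add: mult_left_mono)
  also have "\<dots> < b * exp b" using \<open>a < b\<close> by (intro mult_strict_right_mono) auto
  finally show "a * exp a < b * exp b" .
qed

lemma ex1_mult_exp_eq:
  fixes y :: real
  assumes "y \<ge> 0"
  shows "\<exists>!w. w \<ge> 0 \<and> w * exp w = y"
proof (rule ex_ex1I)
  have "y * 1 \<le> y * exp y" using assms by (intro mult_left_mono) auto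
  moreover have "continuous_on {0..y} (\<lambda>t. t * exp t)" by (intro continuous_intros)
  ultimately show "\<exists>w. w \<ge> 0 \<and> w * exp w = y"
    using IVT'[of "\<lambda>t. t * exp t" 0 y y] assms by force
next
  fix a b assume "a \<ge> 0 \<and> a * exp a = y" "b \<ge> 0 \<and> b * exp b = y"
  then show "a = b"
    using inj_onD[OF strict_mono_on_imp_inj_on[OF mult_exp_strict_mono], of a b] by simp
qed

lemma
  assumes "y \<ge> 0"
  shows lambertW_nonneg: "lambertW y \<ge> 0"
    and lambertW_mult_exp: "lambertW y * exp (lambertW y) = y"
  using theI'[OF ex1_mult_exp_eq[OF assms]] unfolding lambertW_def by simp_all

lemma lambertW_le:
  assumes "y \<ge> 0" "s \<ge> 0" "y \<le> s * exp s"
  shows "lambertW y \<le> s"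
proof (rule ccontr)
  assume "\<not> lambertW y \<le> s"
  then have "s * exp s < lambertW y * exp (lambertW y)"
    using lambertW_nonneg[OF assms(1)] assms(2)
    by (intro strict_mono_onD[OF mult_exp_strict_mono]) auto
  then show False using lambertW_mult_exp[OF assms(1)] assms(3) by simp
qed

lemma one_minus_mult_exp_le_one: "(1 - s) * exp s \<le> (1::real)"
proof -
  have "(1 - s) * exp s \<le> exp (- s) * exp s"
    using exp_ge_add_one_self[of "- s"] by (intro mult_right_mono) auto
  then show ?thesis by (simp flip: exp_add)
qed

lemma K_fn_nonneg: "0 \<le> u \<Longrightarrow> 0 \<le> K_fn \<sigma> u"
  by (simp add: K_fn_def beta_fn_def)

lemma K_fn_eq_self:
  assumes "1 \<le> u"
  shows "K_fn \<sigma> u = u"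
proof -
  have "ln (1 / u) \<le> 0" using assms by (simp add: ln_div)
  then have "max (ln (1 / u) - \<sigma>^2 / 2) 0 = 0"
    using zero_le_power2[of \<sigma>] by linarith
  then show ?thesis using assms by (simp add: K_fn_def beta_fn_def)
qed

lemma K_fn_exp:
  assumes "0 \<le> s"
  shows "K_fn \<sigma> (exp (- (\<sigma>^2 / 2) - s)) = exp (- (\<sigma>^2 / 2) - s) * exp (- (s^2) / (2 * \<sigma>^2))"
proof -
  have "1 / exp (- (\<sigma>^2 / 2) - s) = exp (\<sigma>^2 / 2 + s)"
    by (simp add: divide_simps flip: exp_add)
  then have "max (ln (1 / exp (- (\<sigma>^2 / 2) - s)) - \<sigma>^2 / 2) 0 = s"
    using assms by simp
  then show ?thesis by (simp add: K_fn_def beta_fn_def)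
qed

lemma conjugate_term_le:
  assumes "0 \<le> v" "v \<le> 1" "0 \<le> u"
  shows "u * v - K_fn \<sigma> u \<le> v"
proof (cases "u \<le> 1")
  case True
  then have "u * v \<le> 1 * v" using assms by (intro mult_right_mono) auto
  then show ?thesis using K_fn_nonneg[OF assms(3), of \<sigma>] by linarith
next
  case False
  then have "u * v \<le> u * 1" using assms by (intro mult_left_mono) auto
  then show ?thesis using K_fn_eq_self[of u \<sigma>] False assms by linarith
qed

lemma bdd_above_conjugate_terms:
  "0 \<le> v \<Longrightarrow> v \<le> 1 \<Longrightarrow> bdd_above ((\<lambda>u. u * v - K_fn \<sigma> u) ` {0..})"
  using conjugate_term_le by (intro bdd_aboveI[where M = v]) auto

lemma conjugate_term_le_Kstar:
  "0 \<le> v \<Longrightarrow> v \<le> 1 \<Longrightarrow> 0 \<le> u \<Longrightarrow> u * v - K_fn \<sigma> u \<le> Kstar \<sigma> v"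
  unfolding Kstar_def by (intro cSUP_upper bdd_above_conjugate_terms) auto

lemma Kstar_le_self: "0 \<le> v \<Longrightarrow> v \<le> 1 \<Longrightarrow> Kstar \<sigma> v \<le> v"
  unfolding Kstar_def using conjugate_term_le by (intro cSUP_least) auto

lemma Kstar_mono:
  assumes "0 \<le> v" "v \<le> v'" "v' \<le> 1"
  shows "Kstar \<sigma> v \<le> Kstar \<sigma> v'"
  unfolding Kstar_def
proof (rule cSUP_mono)
  show "bdd_above ((\<lambda>u. u * v' - K_fn \<sigma> u) ` {0..})"
    using assms by (intro bdd_above_conjugate_terms) auto
  fix u :: real assume "u \<in> {0..}"
  then show "\<exists>u'\<in>{0..}. u * v - K_fn \<sigma> u \<le> u' * v' - K_fn \<sigma> u'"
    using assms by (intro bexI[of _ u]) (auto intro: mult_left_mono)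
qed auto

definition gauss_tail_inv :: "real \<Rightarrow> real \<Rightarrow> real" where
  "gauss_tail_inv \<sigma> v = \<sigma> * sqrt (2 * ln (2 / v))"

lemma gauss_tail_inv_pos: "0 < \<sigma> \<Longrightarrow> 0 < v \<Longrightarrow> v < 2 \<Longrightarrow> 0 < gauss_tail_inv \<sigma> v"
  by (simp add: gauss_tail_inv_def)

lemma exp_gauss_tail_inv:
  assumes "0 < \<sigma>" "0 < v" "v < 2"
  shows "exp (- ((gauss_tail_inv \<sigma> v)^2) / (2 * \<sigma>^2)) = v / 2"
proof -
  have "(gauss_tail_inv \<sigma> v)^2 = \<sigma>^2 * (2 * ln (2 / v))"
    using assms by (simp add: gauss_tail_inv_def power_mult_distrib)
  then have "- ((gauss_tail_inv \<sigma> v)^2) / (2 * \<sigma>^2) = - ln (2 / v)"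
    using assms by (simp add: field_simps)
  then show ?thesis using assms by (simp add: exp_minus)
qed

lemma gauss_tail_inv_deriv:
  assumes "0 < \<sigma>" "0 < v" "v < 2"
  shows "(gauss_tail_inv \<sigma> has_real_derivative - (\<sigma>^2) / (v * gauss_tail_inv \<sigma> v)) (at v)"
proof -
  have "ln (2 / v) > 0" using assms by simp
  then have "((\<lambda>v. \<sigma> * sqrt (2 * ln (2 / v))) has_real_derivative
      \<sigma> * (inverse (sqrt (2 * ln (2 / v))) / 2 * (2 * (- 2 / v^2 / (2 / v))))) (at v)"
    using assms by (auto intro!: derivative_eq_intros simp: power2_eq_square)
  moreover have "\<sigma> * (inverse (sqrt (2 * ln (2 / v))) / 2 * (2 * (- 2 / v^2 / (2 / v))))
      = - (\<sigma>^2) / (v * gauss_tail_inv \<sigma> v)"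
    using assms \<open>ln (2 / v) > 0\<close> by (simp add: gauss_tail_inv_def field_simps power2_eq_square)
  ultimately show ?thesis by (simp add: gauss_tail_inv_def[abs_def])
qed

lemma gauss_tail_inv_primitive_deriv:
  assumes "0 < \<sigma>" "0 < v" "v < 2"
  shows "((\<lambda>v. (gauss_tail_inv \<sigma> v - 1) * exp (gauss_tail_inv \<sigma> v)) has_real_derivative
      - (\<sigma>^2) * exp (gauss_tail_inv \<sigma> v) / v) (at v)"
  using gauss_tail_inv_pos[OF assms]
  by (auto intro!: derivative_eq_intros gauss_tail_inv_deriv[OF assms] simp: field_simps)

lemma Kstar_ge_gauss_tail:
  assumes "0 < \<sigma>" "0 < v" "v \<le> 1"
  shows "v / 2 * exp (- (\<sigma>^2 / 2)) * exp (- gauss_tail_inv \<sigma> v) \<le> Kstar \<sigma> v"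
proof -
  define s where "s = gauss_tail_inv \<sigma> v"
  define u where "u = exp (- (\<sigma>^2 / 2) - s)"
  have "0 \<le> s" using gauss_tail_inv_pos[of \<sigma> v] assms by (simp add: s_def)
  then have "K_fn \<sigma> u = u * (v / 2)"
    using exp_gauss_tail_inv[of \<sigma> v] assms by (simp add: u_def s_def K_fn_exp)
  moreover have "u = exp (- (\<sigma>^2 / 2)) * exp (- s)"
    by (simp add: u_def flip: exp_add)
  ultimately have "u * v - K_fn \<sigma> u = v / 2 * exp (- (\<sigma>^2 / 2)) * exp (- s)"
    by (simp add: algebra_simps)
  moreover have "u * v - K_fn \<sigma> u \<le> Kstar \<sigma> v"
    using assms by (intro conjugate_term_le_Kstar) (auto simp: u_def)
  ultimately show ?thesis by (simp add: s_def)
qed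

lemma Kstar_pos:
  assumes "0 < \<sigma>" "0 < v" "v \<le> 1"
  shows "0 < Kstar \<sigma> v"
proof -
  have "0 < v / 2 * exp (- (\<sigma>^2 / 2)) * exp (- gauss_tail_inv \<sigma> v)"
    using assms by simp
  then show ?thesis using Kstar_ge_gauss_tail[OF assms] by linarith
qed

lemma inverse_Kstar_integrable:
  assumes "0 < \<sigma>" "0 < w"
  shows "(\<lambda>v. 1 / Kstar \<sigma> v) integrable_on {w..1}"
proof -
  have "mono_on {w..1} (\<lambda>v. - (1 / Kstar \<sigma> v))"
  proof (rule monotone_onI)
    fix a b assume ab: "a \<in> {w..1}" "b \<in> {w..1}" "a \<le> b"
    then have "Kstar \<sigma> a \<le> Kstar \<sigma> b" "0 < Kstar \<sigma> a"
      using assms by (auto intro: Kstar_mono Kstar_pos)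
    then show "- (1 / Kstar \<sigma> a) \<le> - (1 / Kstar \<sigma> b)"
      by (simp add: frac_le)
  qed
  then have "(\<lambda>v. - (1 / Kstar \<sigma> v)) integrable_on {w..1}"
    by (rule integrable_on_mono_on)
  then show ?thesis by (simp add: integrable_neg_iff)
qed

lemma F_fn_ge_neg_ln:
  assumes "0 < \<sigma>" "0 < w" "w \<le> 1"
  shows "- ln w \<le> F_fn \<sigma> w"
proof -
  have primitive: "((\<lambda>v. 1 / v) has_integral (ln 1 - ln w)) {w..1}"
  proof (rule fundamental_theorem_of_calculus)
    fix v assume "v \<in> {w..1}"
    then have "(ln has_real_derivative 1 / v) (at v)"
      using assms by (auto intro!: derivative_eq_intros)
    then show "(ln has_vector_derivative 1 / v) (at v within {w..1})"
      by (simp add: has_real_derivative_iff_has_vector_derivative has_vector_derivative_at_within)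
  qed (use assms in auto)
  have "1 / v \<le> 1 / Kstar \<sigma> v" if "v \<in> {w..1}" for v
    using that assms Kstar_le_self[of v \<sigma>] Kstar_pos[of \<sigma> v] by (auto intro: frac_le)
  then have "ln 1 - ln w \<le> F_fn \<sigma> w"
    unfolding F_fn_def
    using has_integral_le[OF primitive integrable_integral[OF inverse_Kstar_integrable[OF assms(1,2)]]]
    by blast
  then show ?thesis by simp
qed

lemma has_integral_Kstar_majorant:
  assumes "0 < \<sigma>" "0 < w" "w \<le> 1"
  defines "P \<equiv> \<lambda>v. (gauss_tail_inv \<sigma> v - 1) * exp (gauss_tail_inv \<sigma> v)"
  shows "((\<lambda>v. 2 * exp (\<sigma>^2 / 2) * exp (gauss_tail_inv \<sigma> v) / v) has_integral
           2 * exp (\<sigma>^2 / 2) / \<sigma>^2 * (P w - P 1)) {w..1}"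
proof -
  define C where "C = 2 * exp (\<sigma>^2 / 2) / \<sigma>^2"
  have "((\<lambda>v. 2 * exp (\<sigma>^2 / 2) * exp (gauss_tail_inv \<sigma> v) / v) has_integral
           (- C * P 1) - (- C * P w)) {w..1}"
  proof (rule fundamental_theorem_of_calculus)
    fix v assume "v \<in> {w..1}"
    then have "((\<lambda>v. - C * P v) has_real_derivative
        - C * (- (\<sigma>^2) * exp (gauss_tail_inv \<sigma> v) / v)) (at v)"
      unfolding P_def using assms
      by (intro DERIV_cmult gauss_tail_inv_primitive_deriv) auto
    also have "- C * (- (\<sigma>^2) * exp (gauss_tail_inv \<sigma> v) / v)
        = 2 * exp (\<sigma>^2 / 2) * exp (gauss_tail_inv \<sigma> v) / v"
      using assms by (simp add: C_def)
    finally show "((\<lambda>v. - C * P v) has_vector_derivative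
        2 * exp (\<sigma>^2 / 2) * exp (gauss_tail_inv \<sigma> v) / v) (at v within {w..1})"
      using has_real_derivative_iff_has_vector_derivative has_vector_derivative_at_within
      by blast
  qed (use assms in auto)
  moreover have "- C * P 1 - (- C * P w) = C * (P w - P 1)" by (simp add: algebra_simps)
  ultimately show ?thesis by (simp only: C_def)
qed

lemma F_fn_le_mult_exp:
  assumes "0 < \<sigma>" "0 < w" "w \<le> 1"
  shows "F_fn \<sigma> w \<le> 2 * exp (\<sigma>^2 / 2) / \<sigma>^2 * gauss_tail_inv \<sigma> w * exp (gauss_tail_inv \<sigma> w)"
proof -
  define C where "C = 2 * exp (\<sigma>^2 / 2) / \<sigma>^2"
  define s where "s = gauss_tail_inv \<sigma> w"
  define s1 where "s1 = gauss_tail_inv \<sigma> 1"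
  have "1 / Kstar \<sigma> v \<le> 2 * exp (\<sigma>^2 / 2) * exp (gauss_tail_inv \<sigma> v) / v"
    if "v \<in> {w..1}" for v
  proof -
    have v: "0 < v" "v \<le> 1" using that assms by auto
    then have "1 / Kstar \<sigma> v \<le> 1 / (v / 2 * exp (- (\<sigma>^2 / 2)) * exp (- gauss_tail_inv \<sigma> v))"
      using Kstar_ge_gauss_tail[OF assms(1) v] by (intro frac_le) auto
    also have "\<dots> = 2 * exp (\<sigma>^2 / 2) * exp (gauss_tail_inv \<sigma> v) / v"
      using v by (simp add: exp_minus field_simps)
    finally show ?thesis .
  qed
  then have "F_fn \<sigma> w \<le> C * ((s - 1) * exp s - (s1 - 1) * exp s1)"
    unfolding F_fn_def C_def s_def s1_def
    using has_integral_le[OF integrable_integral[OF inverse_Kstar_integrable[OF assms(1,2)]]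
        has_integral_Kstar_majorant[OF assms]]
    by blast
  also have "\<dots> \<le> C * (s * exp s)"
  proof -
    have "0 < s" using assms by (simp add: s_def gauss_tail_inv_pos)
    then have "1 \<le> exp s" by simp
    moreover have "(s - 1) * exp s - (s1 - 1) * exp s1 = s * exp s - exp s + (1 - s1) * exp s1"
      by (simp add: algebra_simps)
    ultimately have "(s - 1) * exp s - (s1 - 1) * exp s1 \<le> s * exp s"
      using one_minus_mult_exp_le_one[of s1] by linarith
    then show ?thesis using assms by (intro mult_left_mono) (auto simp: C_def)
  qed
  finally show ?thesis by (simp add: C_def s_def)
qed

lemma F_fn_surj:
  assumes "0 < \<sigma>" "0 \<le> x"
  shows "x \<in> F_fn \<sigma> ` {0<..1}"
proof -
  define w0 where "w0 = exp (- x)"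
  have w0: "0 < w0" "w0 \<le> 1" using assms by (auto simp: w0_def)
  have "x \<le> F_fn \<sigma> w0" using F_fn_ge_neg_ln[OF assms(1) w0] by (simp add: w0_def)
  moreover have "F_fn \<sigma> 1 \<le> x" using assms by (simp add: F_fn_def)
  moreover have "continuous_on {w0..1} (F_fn \<sigma>)"
    unfolding F_fn_def[abs_def]
    by (rule indefinite_integral_continuous_1'[OF inverse_Kstar_integrable[OF assms(1) w0(1)]])
  ultimately obtain w where "w0 \<le> w" "w \<le> 1" "F_fn \<sigma> w = x"
    using IVT2'[of "F_fn \<sigma>" 1 x w0] w0 by auto
  then show ?thesis using w0 by force
qed

(* inv_into merely picks some preimage. *)
lemma
  assumes "0 < \<sigma>" "0 \<le> x"
  shows F_inv_mem: "F_inv \<sigma> x \<in> {0<..1}"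
    and F_fn_F_inv: "F_fn \<sigma> (F_inv \<sigma> x) = x"
  using inv_into_into[OF F_fn_surj[OF assms]] f_inv_into_f[OF F_fn_surj[OF assms]]
  by (simp_all add: F_inv_def)

theorem lemma54:
  fixes \<sigma> x :: real
  assumes "\<sigma> > 0" and "x > 0"
  shows "F_inv \<sigma> x \<le> 2 * exp (- (1 / (2 * \<sigma>^2)) *
           (lambertW (x * \<sigma>^2 / (2 * exp (\<sigma>^2 / 2))))^2)"
proof -
  define z where "z = F_inv \<sigma> x"
  define s where "s = gauss_tail_inv \<sigma> z"
  define y where "y = x * \<sigma>^2 / (2 * exp (\<sigma>^2 / 2))"
  have z: "0 < z" "z \<le> 1" using F_inv_mem[of \<sigma> x] assms by (auto simp: z_def)
  have "x \<le> 2 * exp (\<sigma>^2 / 2) / \<sigma>^2 * s * exp s"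
    using F_fn_le_mult_exp[OF assms(1) z] F_fn_F_inv[of \<sigma> x] assms by (simp add: z_def s_def)
  then have "y \<le> s * exp s" using assms by (simp add: y_def field_simps)
  moreover have "0 \<le> y" "0 < s"
    using assms z by (simp_all add: y_def s_def gauss_tail_inv_pos)
  ultimately have "(lambertW y)^2 \<le> s^2"
    using lambertW_le lambertW_nonneg by (simp add: power_mono)
  then have "exp (- (s^2) / (2 * \<sigma>^2)) \<le> exp (- (1 / (2 * \<sigma>^2)) * (lambertW y)^2)"
    using assms by (simp add: field_simps)
  moreover have "z = 2 * exp (- (s^2) / (2 * \<sigma>^2))"
    using exp_gauss_tail_inv[OF assms(1), of z] z by (simp add: s_def)
  ultimately show ?thesis by (simp add: z_def y_def)
qed

end
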